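(* Let $A\subseteq B$ be an extension of commutative rings which has a retraction, i.e. there is a ring morphism $f:B\to A$ with $f(a)=a$ for all $a\in A$. Then $\mathfrak{C}(A,B)=0$.
   Context: All rings are commutative with identity. For an extension of rings $A\subseteq B$ and $A$-submodules $L,L'$ of $B$, $LL'$ is the $A$-submodule of finite sums $\sum x_ky_k$ with $x_k\in L,y_k\in L'$. An $A$-submodule $L$ of $B$ is an invertible ideal of $A\subseteq B$ if $LL'=A$ for some $A$-submodule $L'$ of $B$; these form an abelian group $\mathscr{G}(A,B)$ under multiplication, and $\mathfrak{C}(A,B)=\mathscr{G}(A,B)/\{Ax: x\in B^\ast\}$. *)

theory Defs
  imports Main
begin

text \<open>The ring B is modelled as a type 'b of class comm_ring_1; the subring A is a subset of it.\<close>

definition is_subring :: "'b::comm_ring_1 set \<Rightarrow> bool" where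
  "is_subring A \<longleftrightarrow> 0 \<in> A \<and> 1 \<in> A \<and> (\<forall>x\<in>A. \<forall>y\<in>A. x + y \<in> A \<and> x - y \<in> A \<and> x * y \<in> A)"

definition is_submodule :: "'b::comm_ring_1 set \<Rightarrow> 'b set \<Rightarrow> bool" where
  "is_submodule A L \<longleftrightarrow> 0 \<in> L \<and> (\<forall>x\<in>L. \<forall>y\<in>L. x + y \<in> L) \<and> (\<forall>a\<in>A. \<forall>x\<in>L. a * x \<in> L)"

definition submod_mult :: "'b::comm_ring_1 set \<Rightarrow> 'b set \<Rightarrow> 'b set" where
  "submod_mult L M = {(\<Sum>k<n. x k * y k) | (n::nat) x y. \<forall>k<n. x k \<in> L \<and> y k \<in> M}"

definition invertible_ideal :: "'b::comm_ring_1 set \<Rightarrow> 'b set \<Rightarrow> bool" where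
  "invertible_ideal A L \<longleftrightarrow> is_submodule A L \<and> (\<exists>M. is_submodule A M \<and> submod_mult L M = A)"

definition cyc :: "'b::comm_ring_1 set \<Rightarrow> 'b \<Rightarrow> 'b set" where
  "cyc A x = {a * x | a. a \<in> A}"

text \<open>C(A,B) = G(A,B) / {Ax : x unit of B} is trivial iff every invertible ideal is of that form.\<close>
definition class_group_trivial :: "'b::comm_ring_1 set \<Rightarrow> bool" where
  "class_group_trivial A \<longleftrightarrow> (\<forall>L. invertible_ideal A L \<longrightarrow> (\<exists>x. x dvd 1 \<and> L = cyc A x))"

end

theory Submission
  imports Defs
begin

text \<open>
  If \<open>L\<close> is invertible with inverse \<open>M\<close>, write \<open>1 = \<Sum> x\<^sub>k y\<^sub>k\<close> with \<open>x\<^sub>k \<in> L\<close>, \<open>y\<^sub>k \<in> M\<close>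
  and put \<open>u = \<Sum> f(y\<^sub>k) x\<^sub>k \<in> L\<close>. For \<open>l \<in> L\<close> every \<open>l y\<^sub>k\<close> lies in \<open>A\<close>, hence is fixed by
  \<open>f\<close>, so \<open>l = \<Sum> x\<^sub>k (l y\<^sub>k) = \<Sum> x\<^sub>k f(l) f(y\<^sub>k) = f(l) u\<close>. Thus \<open>L = A u\<close>, and applying
  this to the \<open>x\<^sub>k\<close> gives \<open>1 = u \<Sum> f(x\<^sub>k) y\<^sub>k\<close>, so \<open>u\<close> is a unit.
\<close>

lemma submod_mult_memI:
  assumes "x \<in> L" "y \<in> M"
  shows "x * y \<in> submod_mult L M"
proof -
  have "\<exists>(n::nat) v w. x * y = (\<Sum>k<n. v k * w k) \<and> (\<forall>k<n. v k \<in> L \<and> w k \<in> M)"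
    using assms by (intro exI[of _ "Suc 0"] exI[of _ "\<lambda>_. x"] exI[of _ "\<lambda>_. y"]) simp
  then show ?thesis
    unfolding submod_mult_def by blast
qed

lemma submodule_sum_mem:
  fixes n :: nat
  assumes "is_submodule A L" "\<forall>k<n. c k \<in> A \<and> x k \<in> L"
  shows "(\<Sum>k<n. c k * x k) \<in> L"
  using assms(2)
proof (induction n)
  case 0
  then show ?case using assms(1) by (simp add: is_submodule_def)
next
  case (Suc n)
  then show ?case using assms(1) by (simp add: is_submodule_def)
qed

locale multiplicative_retraction =
  fixes A :: "'b::comm_ring_1 set" and f :: "'b \<Rightarrow> 'b"
  assumes retraction_mem: "f x \<in> A"
    and retraction_mult: "f (x * y) = f x * f y"
    and retraction_fixes: "a \<in> A \<Longrightarrow> f a = a"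
begin

lemma eq_retraction_times_dual_sum:
  assumes "submod_mult L M \<subseteq> A"
    and "\<forall>k<n. y k \<in> M" and "(\<Sum>k<n. x k * y k) = 1" and "l \<in> L"
  shows "l = f l * (\<Sum>k<n. f (y k) * x k)"
proof -
  have fixed: "l * y k = f l * f (y k)" if "k < n" for k
  proof -
    have "l * y k \<in> A"
      using assms(1,2,4) submod_mult_memI \<open>k < n\<close> by blast
    then show ?thesis using retraction_fixes retraction_mult by metis
  qed
  have "l = l * (\<Sum>k<n. x k * y k)"
    using assms(3) by simp
  also have "\<dots> = (\<Sum>k<n. x k * (l * y k))"
    by (simp add: sum_distrib_left mult.left_commute)
  also have "\<dots> = (\<Sum>k<n. x k * (f l * f (y k)))"
    using fixed by simp
  also have "\<dots> = f l * (\<Sum>k<n. f (y k) * x k)"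
    by (simp add: sum_distrib_left algebra_simps)
  finally show ?thesis .
qed

lemma invertible_ideal_eq_cyc_unit:
  assumes "1 \<in> A" and "invertible_ideal A L"
  shows "\<exists>u. u dvd 1 \<and> L = cyc A u"
proof -
  obtain M where L: "is_submodule A L" and LM: "submod_mult L M = A"
    using assms(2) unfolding invertible_ideal_def by blast
  obtain n x y where xy: "\<forall>k<(n::nat). x k \<in> L \<and> y k \<in> M"
    and one: "(\<Sum>k<n. x k * y k) = 1"
    using assms(1) LM unfolding submod_mult_def by (smt (verit) mem_Collect_eq)
  define u where "u = (\<Sum>k<n. f (y k) * x k)"
  have factor: "l = f l * u" if "l \<in> L" for l
    unfolding u_def using eq_retraction_times_dual_sum[of L M n y x l] LM xy one that by simp
  have "u \<in> L"
    unfolding u_def using submodule_sum_mem[OF L] xy retraction_mem by simp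
  have "1 = (\<Sum>k<n. f (x k) * u * y k)"
    unfolding one[symmetric] using factor xy by (intro sum.cong) auto
  also have "\<dots> = u * (\<Sum>k<n. f (x k) * y k)"
    by (simp add: sum_distrib_left algebra_simps)
  finally have "u dvd 1"
    by (rule dvdI)
  moreover have "L = cyc A u"
  proof
    show "L \<subseteq> cyc A u"
      unfolding cyc_def using factor retraction_mem by blast
    show "cyc A u \<subseteq> L"
      unfolding cyc_def using \<open>u \<in> L\<close> L by (auto simp: is_submodule_def)
  qed
  ultimately show ?thesis by blast
qed

end

theorem theorem5p10:
  fixes A :: "'b::comm_ring_1 set" and f :: "'b \<Rightarrow> 'b"
  assumes "is_subring A"
    and "\<forall>x. f x \<in> A"
    and "\<forall>x y. f (x + y) = f x + f y"
    and "\<forall>x y. f (x * y) = f x * f y"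
    and "f 1 = 1"
    and "\<forall>a\<in>A. f a = a"
  shows "class_group_trivial A"
proof -
  interpret multiplicative_retraction A f
    using assms(2,4,6) by unfold_locales auto
  have "1 \<in> A"
    using assms(1) by (simp add: is_subring_def)
  then show ?thesis
    unfolding class_group_trivial_def using invertible_ideal_eq_cyc_unit by blast
qed

end
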